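(* Let $X$ be a positive random variable with finite mean $\mu$, which is either discrete with probability mass function $f_X$ or absolutely continuous with density $f_X$. Suppose there exist positive constants $c$ and $t_0$ such that $$\frac{x}{\mu}f_X(x)\le f_X(x-c)\qquad\text{for all } x\ge t_0.$$ Then, if $X^s$ has the size bias distribution of $X$, $$\mathbb{P}(X^s\ge t)\le \mathbb{P}(X+c\ge t)\qquad\text{for all } t\ge t_0.$$
   Context: Size bias transform: for a positive random variable $X$ with finite mean $\mu$, $X^s$ has the size bias distribution of $X$ if $\mathbb{E}[Xf(X)]=\mu\mathbb{E}[f(X^s)]$ for all $f$ with $\mathbb{E}[Xf(X)]<\infty$; when $X$ has density or mass function $f_X$, $X^s$ has density or mass function $x f_X(x)/\mu$. *)

theory Defs
  imports "HOL-Probability.Probability"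
begin

definition size_bias ::
  "'a measure \<Rightarrow> ('a \<Rightarrow> real) \<Rightarrow> 'b measure \<Rightarrow> ('b \<Rightarrow> real) \<Rightarrow> bool" where
  "size_bias M X N Xs \<longleftrightarrow>
     (\<forall>f :: real \<Rightarrow> real. f \<in> borel_measurable borel \<longrightarrow>
        integrable M (\<lambda>\<omega>. X \<omega> * f (X \<omega>)) \<longrightarrow>
        (\<integral>\<omega>. X \<omega> * f (X \<omega>) \<partial>M) = (\<integral>\<omega>. X \<omega> \<partial>M) * (\<integral>\<omega>. f (Xs \<omega>) \<partial>N))"

definition discrete_with_pmf :: "'a measure \<Rightarrow> ('a \<Rightarrow> real) \<Rightarrow> (real \<Rightarrow> real) \<Rightarrow> bool" where
  "discrete_with_pmf M X f \<longleftrightarrow>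
     (\<exists>S. countable S \<and> (AE \<omega> in M. X \<omega> \<in> S)) \<and>
     (\<forall>x. f x = measure M {\<omega> \<in> space M. X \<omega> = x})"

definition abs_cont_with_density :: "'a measure \<Rightarrow> ('a \<Rightarrow> real) \<Rightarrow> (real \<Rightarrow> real) \<Rightarrow> bool" where
  "abs_cont_with_density M X f \<longleftrightarrow>
     (\<forall>x. 0 \<le> f x) \<and> distributed M lborel X (\<lambda>x. ennreal (f x))"

end

theory Submission
  imports Defs
begin

text \<open>Taking the indicator of \<open>[t, \<infinity>)\<close> as test function in the size bias identity gives
  \<open>\<mu> P(Xs \<ge> t) = E[X; X \<ge> t]\<close>, the integral of \<open>x f(x)\<close> over \<open>x \<ge> t\<close>. The hypothesis bounds
  it by \<open>\<mu>\<close> times the integral of \<open>f(x - c)\<close> over \<open>x \<ge> t\<close>, which is \<open>\<mu> P(X \<ge> t - c)\<close>: by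
  translation invariance of Lebesgue measure in the continuous case, and because the events
  \<open>X = x - c\<close> are disjoint in the discrete case.\<close>

lemma integral_pos_AE:
  fixes f :: "'a \<Rightarrow> real"
  assumes "prob_space M" and "integrable M f" and pos: "AE x in M. 0 < f x"
  shows "0 < (\<integral>x. f x \<partial>M)"
proof -
  have nonneg: "AE x in M. 0 \<le> f x"
    using pos by eventually_elim simp
  have "(\<integral>x. f x \<partial>M) \<noteq> 0"
  proof
    assume "(\<integral>x. f x \<partial>M) = 0"
    then have "AE x in M. f x = 0"
      using integral_nonneg_eq_0_iff_AE[OF \<open>integrable M f\<close> nonneg] by simp
    with pos have "AE x in M. False"
      by eventually_elim simp
    then show False
      using prob_space.AE_False[OF \<open>prob_space M\<close>] by simp
  qed
  then show ?thesis
    using integral_nonneg_AE[OF nonneg] by simp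
qed

lemma integrable_mult_indicator_tail:
  fixes X :: "'a \<Rightarrow> real"
  assumes "integrable M X"
  shows "integrable M (\<lambda>\<omega>. X \<omega> * indicator {t..} (X \<omega>))"
proof -
  have [measurable]: "X \<in> borel_measurable M"
    using assms by (rule borel_measurable_integrable)
  show ?thesis
    using assms by (rule Bochner_Integration.integrable_bound) (auto simp: indicator_def)
qed

lemma size_bias_integral_tail:
  assumes "size_bias M X N Xs" and "integrable M X"
  shows "(\<integral>\<omega>. X \<omega> * indicator {t..} (X \<omega>) \<partial>M)
           = (\<integral>\<omega>. X \<omega> \<partial>M) * measure N {\<omega> \<in> space N. t \<le> Xs \<omega>}"
proof -
  have "(\<integral>\<omega>. X \<omega> * indicator {t..} (X \<omega>) \<partial>M)
          = (\<integral>\<omega>. X \<omega> \<partial>M) * (\<integral>\<omega>. indicator {t..} (Xs \<omega>) \<partial>N)"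
    using assms integrable_mult_indicator_tail[OF assms(2)] unfolding size_bias_def by auto
  also have "(\<integral>\<omega>. indicator {t..} (Xs \<omega>) \<partial>N) = (\<integral>\<omega>. indicator {\<omega> \<in> space N. t \<le> Xs \<omega>} \<omega> \<partial>N)"
    by (intro Bochner_Integration.integral_cong) (auto simp: indicator_def)
  also have "\<dots> = measure N {\<omega> \<in> space N. t \<le> Xs \<omega>}"
    by (simp add: Int_absorb2 subset_iff)
  finally show ?thesis .
qed

lemma nn_integral_tail_le_density:
  fixes X :: "'a \<Rightarrow> real" and f :: "real \<Rightarrow> real"
  assumes "abs_cont_with_density M X f" and "0 \<le> m" and "0 \<le> t"
    and ratio: "\<And>x. t \<le> x \<Longrightarrow> x * f x \<le> m * f (x - c)"
  shows "(\<integral>\<^sup>+\<omega>. ennreal (X \<omega> * indicator {t..} (X \<omega>)) \<partial>M)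
           \<le> ennreal m * emeasure M {\<omega> \<in> space M. t \<le> X \<omega> + c}"
proof -
  have f_nonneg: "\<And>x. 0 \<le> f x" and D: "distributed M lborel X (\<lambda>x. ennreal (f x))"
    using assms(1) unfolding abs_cont_with_density_def by auto
  have f_meas: "(\<lambda>x. ennreal (f x)) \<in> borel_measurable borel"
    using distributed_borel_measurable[OF D] by simp
  have "(\<integral>\<^sup>+\<omega>. ennreal (X \<omega> * indicator {t..} (X \<omega>)) \<partial>M)
          = (\<integral>\<^sup>+x. ennreal (f x) * ennreal (x * indicator {t..} x) \<partial>lborel)"
    by (rule distributed_nn_integral[OF D, symmetric]) simp
  also have "\<dots> \<le> (\<integral>\<^sup>+x. ennreal m * (ennreal (f (x - c)) * indicator {t..} x) \<partial>lborel)"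
  proof (rule nn_integral_mono)
    fix x
    show "ennreal (f x) * ennreal (x * indicator {t..} x)
            \<le> ennreal m * (ennreal (f (x - c)) * indicator {t..} x)"
    proof (cases "t \<le> x")
      case True
      then show ?thesis
        using ratio[OF True] \<open>0 \<le> t\<close> \<open>0 \<le> m\<close> f_nonneg
        by (simp add: ennreal_mult'[symmetric] ennreal_mult[symmetric] mult.commute)
    qed simp
  qed
  also have "\<dots> = ennreal m * (\<integral>\<^sup>+x. ennreal (f (x - c)) * indicator {t..} x \<partial>lborel)"
    using measurable_compose[OF _ f_meas, of "\<lambda>x. x - c" borel]
    by (intro nn_integral_cmult) auto
  also have "(\<integral>\<^sup>+x. ennreal (f (x - c)) * indicator {t..} x \<partial>lborel)
               = (\<integral>\<^sup>+y. ennreal (f y) * indicator {t - c..} y \<partial>lborel)"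
  proof -
    have "(\<integral>\<^sup>+y. ennreal (f y) * indicator {t - c..} y \<partial>lborel)
            = ennreal \<bar>1\<bar> * (\<integral>\<^sup>+x. ennreal (f (- c + 1 * x)) * indicator {t - c..} (- c + 1 * x) \<partial>lborel)"
      using f_meas by (intro nn_integral_real_affine) auto
    also have "\<dots> = (\<integral>\<^sup>+x. ennreal (f (x - c)) * indicator {t..} x \<partial>lborel)"
      by (simp only: abs_one ennreal_1 mult_1 mult_1_left)
        (intro nn_integral_cong, auto simp: indicator_def)
    finally show ?thesis
      by simp
  qed
  also have "(\<integral>\<^sup>+y. ennreal (f y) * indicator {t - c..} y \<partial>lborel) = emeasure M (X -` {t - c..} \<inter> space M)"
    by (rule distributed_emeasure[OF D, symmetric]) simp
  also have "X -` {t - c..} \<inter> space M = {\<omega> \<in> space M. t \<le> X \<omega> + c}"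
    by auto
  finally show ?thesis .
qed

lemma nn_integral_tail_le_pmf:
  fixes X :: "'a \<Rightarrow> real" and f :: "real \<Rightarrow> real"
  assumes "prob_space M" and [measurable]: "X \<in> borel_measurable M"
    and "discrete_with_pmf M X f" and "0 \<le> m" and "0 \<le> t"
    and ratio: "\<And>x. t \<le> x \<Longrightarrow> x * f x \<le> m * f (x - c)"
  shows "(\<integral>\<^sup>+\<omega>. ennreal (X \<omega> * indicator {t..} (X \<omega>)) \<partial>M)
           \<le> ennreal m * emeasure M {\<omega> \<in> space M. t \<le> X \<omega> + c}"
proof -
  interpret prob_space M by fact
  obtain S where "countable S" and X_in_S: "AE \<omega> in M. X \<omega> \<in> S"
    and f_eq: "\<And>x. f x = measure M {\<omega> \<in> space M. X \<omega> = x}"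
    using assms(3) unfolding discrete_with_pmf_def by auto
  define E where "E x = {\<omega> \<in> space M. X \<omega> = x}" for x
  have [measurable]: "E x \<in> sets M" for x
    unfolding E_def by measurable
  define D where "D = {x \<in> S. t \<le> x}"
  have "countable D"
    unfolding D_def using \<open>countable S\<close> by auto
  have "(\<integral>\<^sup>+\<omega>. ennreal (X \<omega> * indicator {t..} (X \<omega>)) \<partial>M)
          = (\<integral>\<^sup>+\<omega>. (\<integral>\<^sup>+x. ennreal x * indicator (E x) \<omega> \<partial>count_space D) \<partial>M)"
  proof (rule nn_integral_cong_AE)
    show "AE \<omega> in M. ennreal (X \<omega> * indicator {t..} (X \<omega>))
                       = (\<integral>\<^sup>+x. ennreal x * indicator (E x) \<omega> \<partial>count_space D)"
      using X_in_S AE_space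
    proof eventually_elim
      case (elim \<omega>)
      show ?case
      proof (cases "X \<omega> \<in> D")
        case True
        have "(\<integral>\<^sup>+x. ennreal x * indicator (E x) \<omega> \<partial>count_space D)
                = (\<integral>\<^sup>+x. ennreal x * indicator {X \<omega>} x \<partial>count_space D)"
          using elim by (intro nn_integral_cong) (auto simp: E_def indicator_def)
        also have "\<dots> = ennreal (X \<omega>)"
          using True by (simp add: nn_integral_indicator_singleton)
        finally show ?thesis
          using True by (auto simp: D_def indicator_def)
      next
        case False
        then have "\<And>x. x \<in> D \<Longrightarrow> ennreal x * indicator (E x) \<omega> = 0"
          by (auto simp: E_def indicator_def)
        then have "(\<integral>\<^sup>+x. ennreal x * indicator (E x) \<omega> \<partial>count_space D) = 0"
          by (simp add: nn_integral_0_iff_AE AE_count_space)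
        then show ?thesis
          using False elim by (simp add: D_def indicator_def)
      qed
    qed
  qed
  also have "\<dots> = (\<integral>\<^sup>+x. (\<integral>\<^sup>+\<omega>. ennreal x * indicator (E x) \<omega> \<partial>M) \<partial>count_space D)"
    by (rule nn_integral_count_space_nn_integral[OF \<open>countable D\<close>]) simp
  also have "\<dots> = (\<integral>\<^sup>+x. ennreal (x * f x) \<partial>count_space D)"
  proof (rule nn_integral_cong)
    fix x assume "x \<in> space (count_space D)"
    then have "0 \<le> x"
      using \<open>0 \<le> t\<close> by (auto simp: D_def)
    then show "(\<integral>\<^sup>+\<omega>. ennreal x * indicator (E x) \<omega> \<partial>M) = ennreal (x * f x)"
      by (simp add: nn_integral_cmult_indicator emeasure_eq_measure f_eq E_def ennreal_mult)
  qed
  also have "\<dots> \<le> (\<integral>\<^sup>+x. ennreal m * emeasure M (E (x - c)) \<partial>count_space D)"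
  proof (rule nn_integral_mono)
    fix x assume "x \<in> space (count_space D)"
    then have "x * f x \<le> m * f (x - c)"
      by (intro ratio) (auto simp: D_def)
    then show "ennreal (x * f x) \<le> ennreal m * emeasure M (E (x - c))"
      using \<open>0 \<le> m\<close> by (simp add: emeasure_eq_measure f_eq E_def ennreal_mult[symmetric])
  qed
  also have "\<dots> = ennreal m * (\<integral>\<^sup>+x. emeasure M (E (x - c)) \<partial>count_space D)"
    by (rule nn_integral_cmult) simp
  also have "(\<integral>\<^sup>+x. emeasure M (E (x - c)) \<partial>count_space D) = emeasure M (\<Union>x\<in>D. E (x - c))"
    by (rule emeasure_UN_countable[symmetric]) (auto simp: \<open>countable D\<close> disjoint_family_on_def E_def)
  also have "\<dots> \<le> emeasure M {\<omega> \<in> space M. t \<le> X \<omega> + c}"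
    by (rule emeasure_mono) (auto simp: E_def D_def)
  finally show ?thesis
    by (simp add: mult_left_mono)
qed

lemma integral_tail_le_shifted_tail:
  fixes X :: "'a \<Rightarrow> real" and f :: "real \<Rightarrow> real"
  assumes "prob_space M" and "integrable M X"
    and "discrete_with_pmf M X f \<or> abs_cont_with_density M X f"
    and "0 \<le> m" and "0 \<le> t"
    and "\<And>x. t \<le> x \<Longrightarrow> x * f x \<le> m * f (x - c)"
  shows "(\<integral>\<omega>. X \<omega> * indicator {t..} (X \<omega>) \<partial>M) \<le> m * measure M {\<omega> \<in> space M. t \<le> X \<omega> + c}"
proof -
  interpret prob_space M by fact
  have X_meas: "X \<in> borel_measurable M"
    using \<open>integrable M X\<close> by (rule borel_measurable_integrable)
  have "integrable M (\<lambda>\<omega>. X \<omega> * indicator {t..} (X \<omega>))"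
    using \<open>integrable M X\<close> by (rule integrable_mult_indicator_tail)
  moreover have "AE \<omega> in M. 0 \<le> X \<omega> * indicator {t..} (X \<omega>)"
    using \<open>0 \<le> t\<close> by (auto simp: indicator_def)
  ultimately have "ennreal (\<integral>\<omega>. X \<omega> * indicator {t..} (X \<omega>) \<partial>M)
                     = (\<integral>\<^sup>+\<omega>. ennreal (X \<omega> * indicator {t..} (X \<omega>)) \<partial>M)"
    by (rule nn_integral_eq_integral[symmetric])
  also have "\<dots> \<le> ennreal m * emeasure M {\<omega> \<in> space M. t \<le> X \<omega> + c}"
    using assms(3)
  proof
    assume "discrete_with_pmf M X f"
    then show ?thesis
      using nn_integral_tail_le_pmf[OF assms(1) X_meas _ assms(4-6)] by blast
  next
    assume "abs_cont_with_density M X f"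
    then show ?thesis
      using nn_integral_tail_le_density[OF _ assms(4-6)] by blast
  qed
  also have "\<dots> = ennreal (m * measure M {\<omega> \<in> space M. t \<le> X \<omega> + c})"
    using \<open>0 \<le> m\<close> by (simp add: emeasure_eq_measure ennreal_mult)
  finally show ?thesis
    using \<open>0 \<le> m\<close> by (simp add: ennreal_le_iff)
qed

theorem theorem3p1:
  fixes M :: "'a measure" and N :: "'b measure"
    and X :: "'a \<Rightarrow> real" and Xs :: "'b \<Rightarrow> real"
    and fX :: "real \<Rightarrow> real" and c t0 :: real
  assumes "prob_space M" and "prob_space N"
    and "X \<in> borel_measurable M" and "Xs \<in> borel_measurable N"
    and "AE \<omega> in M. X \<omega> > 0"
    and "integrable M X"
    and "discrete_with_pmf M X fX \<or> abs_cont_with_density M X fX"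
    and "c > 0" and "t0 > 0"
    and "\<And>x. x \<ge> t0 \<Longrightarrow> x / (\<integral>\<omega>. X \<omega> \<partial>M) * fX x \<le> fX (x - c)"
    and "size_bias M X N Xs"
  shows "\<forall>t \<ge> t0. measure N {\<omega> \<in> space N. Xs \<omega> \<ge> t}
                   \<le> measure M {\<omega> \<in> space M. X \<omega> + c \<ge> t}"
proof (intro allI impI)
  fix t assume "t0 \<le> t"
  define \<mu> where "\<mu> = (\<integral>\<omega>. X \<omega> \<partial>M)"
  have "0 < \<mu>"
    unfolding \<mu>_def using assms(1,6,5) by (rule integral_pos_AE)
  have ratio: "x * fX x \<le> \<mu> * fX (x - c)" if "t \<le> x" for x
    using assms(10)[of x] \<open>t0 \<le> t\<close> that \<open>0 < \<mu>\<close> unfolding \<mu>_def[symmetric]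
    by (simp add: field_simps)
  have "\<mu> * measure N {\<omega> \<in> space N. t \<le> Xs \<omega>} = (\<integral>\<omega>. X \<omega> * indicator {t..} (X \<omega>) \<partial>M)"
    unfolding \<mu>_def using assms(11,6) by (rule size_bias_integral_tail[symmetric])
  also have "\<dots> \<le> \<mu> * measure M {\<omega> \<in> space M. t \<le> X \<omega> + c}"
    using assms(1,6,7) \<open>0 < \<mu>\<close> \<open>t0 \<le> t\<close> \<open>t0 > 0\<close> ratio
    by (intro integral_tail_le_shifted_tail) auto
  finally show "measure N {\<omega> \<in> space N. Xs \<omega> \<ge> t} \<le> measure M {\<omega> \<in> space M. X \<omega> + c \<ge> t}"
    using \<open>0 < \<mu>\<close> by simp
qed

end
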